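(* Let $\kappa\ge3$, $n\ge1$, $r,r'$, $F$, the $n$-periodic sequences $p,q$ and the $Y$-system solution $Y_{i,j,k}$ (for $i+j+k$ even) with the initial conditions $Y_{i,j,-1}=(q_{((\kappa-2)i+\kappa j+r-r')/2})^{-1}$ ($i+j$ odd) and $Y_{i,j,0}=p_{((\kappa-2)i+\kappa j)/2}$ ($i+j$ even) be as described in the context. Then $Y$ is doubly periodic: $$Y_{i,j,k}=Y_{(i,j,k)+\alpha(\kappa,2-\kappa,0)+\beta(n,-n,0)}$$ for all $(i,j,k)$ with $i+j+k\equiv0\bmod 2$ and all $\alpha,\beta\in\mathbb Z$.
   Context: $\kappa\ge 3$ and $n\ge 1$ are integers, $r=\lfloor(\kappa-2)/2\rfloor$, $r'=\lceil(\kappa-2)/2\rceil$, $F$ a field, and $p=(p_m)_{m\in\mathbb Z}$, $q=(q_m)_{m\in\mathbb Z}$ are $n$-periodic sequences in $F$. $Y:\{(i,j,k)\in\mathbb Z^3:i+j+k \text{ even}\}\to F\setminus\{0,-1\}$ satisfies the $Y$-system $Y_{i,j,k+1}Y_{i,j,k-1}=\frac{(1+Y_{i+1,j,k})(1+Y_{i-1,j,k})}{(1+Y_{i,j+1,k}^{-1})(1+Y_{i,j-1,k}^{-1})}$ for all $(i,j,k)$ with $i+j+k$ odd, together with the stated initial conditions at $k=-1$ and $k=0$. *)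

theory Defs
  imports Main
begin

(* r = floor((kappa-2)/2), r' = ceiling((kappa-2)/2) *)
definition rfl :: "int \<Rightarrow> int" where "rfl \<kappa> = (\<kappa> - 2) div 2"
definition rcl :: "int \<Rightarrow> int" where "rcl \<kappa> = - ((2 - \<kappa>) div 2)"

end

theory Submission
  imports Defs
begin

(* The Y-system relation expresses Y at level k+1 through level k and level k-1,
   and symmetrically Y at level k-1 through levels k and k+1.  Hence a solution
   with non-vanishing values is uniquely determined by its two initial levels
   k = -1 and k = 0 (lemma ysystem_unique, by a two-step induction over the
   integers).  The relation is invariant under translations (a, b) of the
   (i, j)-plane with a + b even (lemma ysystem_shift).  For the translation
   alpha(kappa, 2 - kappa) + beta(n, -n) the linear forms indexing p and q in the
   initial conditions change by the multiple -beta*n of the period n (lemma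
   initial_index_shift), so the translated solution has the same initial data as Y
   (lemma initial_data_translation_invariant); by uniqueness it coincides with Y. *)

definition yrhs :: "(int \<Rightarrow> int \<Rightarrow> int \<Rightarrow> 'a::field) \<Rightarrow> int \<Rightarrow> int \<Rightarrow> int \<Rightarrow> 'a" where
  "yrhs Y i j k =
     ((1 + Y (i + 1) j k) * (1 + Y (i - 1) j k)) /
     ((1 + inverse (Y i (j + 1) k)) * (1 + inverse (Y i (j - 1) k)))"

definition ysystem :: "(int \<Rightarrow> int \<Rightarrow> int \<Rightarrow> 'a::field) \<Rightarrow> bool" where
  "ysystem Y \<longleftrightarrow> (\<forall>i j k. odd (i + j + k) \<longrightarrow> Y i j (k + 1) * Y i j (k - 1) = yrhs Y i j k)"

definition nonvanishing :: "(int \<Rightarrow> int \<Rightarrow> int \<Rightarrow> 'a::field) \<Rightarrow> bool" where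
  "nonvanishing Y \<longleftrightarrow> (\<forall>i j k. even (i + j + k) \<longrightarrow> Y i j k \<noteq> 0)"

lemma ysystem_forward:
  assumes "ysystem Y" "nonvanishing Y" "odd (i + j + k)"
  shows "Y i j (k + 1) = yrhs Y i j k / Y i j (k - 1)"
proof -
  have "Y i j (k - 1) \<noteq> 0" using assms(2,3) unfolding nonvanishing_def by fastforce
  with assms(1,3) show ?thesis unfolding ysystem_def by (metis nonzero_mult_div_cancel_right)
qed

lemma ysystem_backward:
  assumes "ysystem Y" "nonvanishing Y" "odd (i + j + k)"
  shows "Y i j (k - 1) = yrhs Y i j k / Y i j (k + 1)"
proof -
  have "Y i j (k + 1) \<noteq> 0" using assms(2,3) unfolding nonvanishing_def by fastforce
  with assms(1,3) show ?thesis unfolding ysystem_def by (metis nonzero_mult_div_cancel_left)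
qed

lemma yrhs_cong:
  assumes "odd (i + j + k)"
    and "\<And>i' j'. even (i' + j' + k) \<Longrightarrow> Y i' j' k = Z i' j' k"
  shows "yrhs Y i j k = yrhs Z i j k"
proof -
  have "even (i + 1 + j + k)" "even (i - 1 + j + k)"
       "even (i + (j + 1) + k)" "even (i + (j - 1) + k)"
    using assms(1) by presburger+
  then have "Y (i + 1) j k = Z (i + 1) j k" "Y (i - 1) j k = Z (i - 1) j k"
       "Y i (j + 1) k = Z i (j + 1) k" "Y i (j - 1) k = Z i (j - 1) k"
    by (simp_all only: assms(2))
  then show ?thesis unfolding yrhs_def by simp
qed

lemma int_two_step_induct [case_names minus_one zero up down]:
  fixes P :: "int \<Rightarrow> bool"
  assumes "P (-1)" "P 0"
    and up: "\<And>k. P (k - 1) \<Longrightarrow> P k \<Longrightarrow> P (k + 1)"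
    and down: "\<And>k. P (k + 1) \<Longrightarrow> P k \<Longrightarrow> P (k - 1)"
  shows "P k"
proof -
  have "P (k - 1) \<and> P k"
  proof (induction k rule: int_induct[where k = 0])
    case base then show ?case using assms(1,2) by simp
  next
    case (step1 i) then show ?case using up[of i] by simp
  next
    case (step2 i) then show ?case using down[of "i - 1"] by simp
  qed
  then show ?thesis by simp
qed

lemma ysystem_unique:
  assumes Y: "ysystem Y" "nonvanishing Y" and Z: "ysystem Z" "nonvanishing Z"
    and init: "\<And>i j k. k \<in> {-1, 0} \<Longrightarrow> even (i + j + k) \<Longrightarrow> Y i j k = Z i j k"
  shows "even (i + j + k) \<Longrightarrow> Y i j k = Z i j k"
proof -
  define agree where "agree k \<longleftrightarrow> (\<forall>i j. even (i + j + k) \<longrightarrow> Y i j k = Z i j k)" for k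
  have rhs: "yrhs Y i j k = yrhs Z i j k" if "agree k" "odd (i + j + k)" for i j k
    using that by (intro yrhs_cong) (auto simp: agree_def)
  have "agree k"
  proof (induction k rule: int_two_step_induct)
    case (up k)
    show ?case unfolding agree_def
    proof (intro allI impI)
      fix i j assume "even (i + j + (k + 1))"
      then have odd: "odd (i + j + k)" by simp
      with up(1) have "Y i j (k - 1) = Z i j (k - 1)" by (simp add: agree_def)
      then show "Y i j (k + 1) = Z i j (k + 1)"
        using ysystem_forward[OF Y odd] ysystem_forward[OF Z odd] rhs[OF up(2) odd] by simp
    qed
  next
    case (down k)
    show ?case unfolding agree_def
    proof (intro allI impI)
      fix i j assume "even (i + j + (k - 1))"
      then have odd: "odd (i + j + k)" by simp
      with down(1) have "Y i j (k + 1) = Z i j (k + 1)" by (simp add: agree_def)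
      then show "Y i j (k - 1) = Z i j (k - 1)"
        using ysystem_backward[OF Y odd] ysystem_backward[OF Z odd] rhs[OF down(2) odd] by simp
    qed
  qed (use init in \<open>auto simp: agree_def\<close>)
  then show "even (i + j + k) \<Longrightarrow> Y i j k = Z i j k" by (simp add: agree_def)
qed

lemma yrhs_shift:
  "yrhs (\<lambda>i j k. Y (i + a) (j + b) k) i j k = yrhs Y (i + a) (j + b) k"
  unfolding yrhs_def by (simp add: add_ac diff_add_eq add_diff_eq)

text \<open>Translation invariance: shifting a solution by (a, b) with a + b even, which
  preserves the parity of lattice points, gives again a non-vanishing solution.\<close>

lemma ysystem_shift:
  assumes "ysystem Y" "nonvanishing Y" "even (a + b)"
  shows "ysystem (\<lambda>i j k. Y (i + a) (j + b) k)" "nonvanishing (\<lambda>i j k. Y (i + a) (j + b) k)"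
proof -
  have par: "even (i + a + (j + b) + k) \<longleftrightarrow> even (i + j + k)" for i j k :: int
    using assms(3) by presburger
  show "ysystem (\<lambda>i j k. Y (i + a) (j + b) k)"
    using assms(1) par unfolding ysystem_def yrhs_shift by blast
  show "nonvanishing (\<lambda>i j k. Y (i + a) (j + b) k)"
    using assms(2) par unfolding nonvanishing_def by blast
qed

lemma periodic_multiple:
  fixes f :: "int \<Rightarrow> 'a"
  assumes per: "\<And>m. f (m + n) = f m"
  shows "f (m + c * n) = f m"
proof (induction c arbitrary: m rule: int_induct[where k = 0])
  case (step1 c)
  then show ?case using per[of "m + c * n"] by (simp add: algebra_simps)
next
  case (step2 c)
  then show ?case using per[of "m + (c - 1) * n"] by (simp add: algebra_simps)
qed simp

text \<open>Under the translation alpha(kappa, 2 - kappa) + beta(n, -n) the linear form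
  (kappa - 2) i + kappa j indexing the initial data drops by 2 beta n, so the
  index of an n-periodic sequence drops by a multiple of its period.\<close>

lemma initial_index_shift:
  fixes \<kappa> n \<alpha> \<beta> i j c d :: int
  shows "((\<kappa> - 2) * (i + (\<alpha> * \<kappa> + \<beta> * n)) + \<kappa> * (j + (\<alpha> * (2 - \<kappa>) - \<beta> * n)) + c - d) div 2
       = ((\<kappa> - 2) * i + \<kappa> * j + c - d) div 2 + (- \<beta>) * n"
proof -
  have "(\<kappa> - 2) * (i + (\<alpha> * \<kappa> + \<beta> * n)) + \<kappa> * (j + (\<alpha> * (2 - \<kappa>) - \<beta> * n)) + c - d
      = ((\<kappa> - 2) * i + \<kappa> * j + c - d) + 2 * (- \<beta> * n)"
    by (simp add: algebra_simps)
  then show ?thesis by simp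
qed

lemma periodic_initial_index_shift:
  fixes f :: "int \<Rightarrow> 'a"
  assumes per: "\<And>m. f (m + n) = f m"
  shows "f (((\<kappa> - 2) * (i + (\<alpha> * \<kappa> + \<beta> * n)) + \<kappa> * (j + (\<alpha> * (2 - \<kappa>) - \<beta> * n)) + c - d) div 2)
       = f (((\<kappa> - 2) * i + \<kappa> * j + c - d) div 2)"
  by (simp only: initial_index_shift periodic_multiple[of f, OF per])

lemma initial_data_translation_invariant:
  fixes \<kappa> n :: int and p q :: "int \<Rightarrow> 'a::field" and Y :: "int \<Rightarrow> int \<Rightarrow> int \<Rightarrow> 'a"
  assumes p_per: "\<And>m. p (m + n) = p m"
    and q_per: "\<And>m. q (m + n) = q m"
    and init_m1: "\<And>i j. odd (i + j) \<Longrightarrow>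
       Y i j (-1) = inverse (q (((\<kappa> - 2) * i + \<kappa> * j + rfl \<kappa> - rcl \<kappa>) div 2))"
    and init_0: "\<And>i j. even (i + j) \<Longrightarrow>
       Y i j 0 = p (((\<kappa> - 2) * i + \<kappa> * j) div 2)"
    and level: "k \<in> {-1, 0}" and parity: "even (i + j + k)"
  shows "Y i j k = Y (i + (\<alpha> * \<kappa> + \<beta> * n)) (j + (\<alpha> * (2 - \<kappa>) - \<beta> * n)) k"
proof -
  have par: "even (i + (\<alpha> * \<kappa> + \<beta> * n) + (j + (\<alpha> * (2 - \<kappa>) - \<beta> * n))) \<longleftrightarrow> even (i + j)"
    by (simp add: algebra_simps)
  consider "k = -1" "odd (i + j)" | "k = 0" "even (i + j)" using level parity by auto
  then show ?thesis
  proof cases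
    case 1
    then show ?thesis
      using init_m1[of i j] init_m1[of "i + (\<alpha> * \<kappa> + \<beta> * n)" "j + (\<alpha> * (2 - \<kappa>) - \<beta> * n)"] par
        periodic_initial_index_shift[of q, OF q_per, of \<kappa> i \<alpha> \<beta> j "rfl \<kappa>" "rcl \<kappa>"]
      by simp
  next
    case 2
    then show ?thesis
      using init_0[of i j] init_0[of "i + (\<alpha> * \<kappa> + \<beta> * n)" "j + (\<alpha> * (2 - \<kappa>) - \<beta> * n)"] par
        periodic_initial_index_shift[of p, OF p_per, of \<kappa> i \<alpha> \<beta> j 0 0]
      by simp
  qed
qed

theorem mainTheorem2:
  fixes \<kappa> n :: int
    and p q :: "int \<Rightarrow> 'a::field"
    and Y :: "int \<Rightarrow> int \<Rightarrow> int \<Rightarrow> 'a"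
  assumes kappa: "\<kappa> \<ge> 3"
    and n: "n \<ge> 1"
    and p_per: "\<And>m. p (m + n) = p m"
    and q_per: "\<And>m. q (m + n) = q m"
    and Y_range: "\<And>i j k. even (i + j + k) \<Longrightarrow> Y i j k \<noteq> 0 \<and> Y i j k \<noteq> -1"
    and Ysys: "\<And>i j k. odd (i + j + k) \<Longrightarrow>
       Y i j (k + 1) * Y i j (k - 1) =
         ((1 + Y (i + 1) j k) * (1 + Y (i - 1) j k)) /
         ((1 + inverse (Y i (j + 1) k)) * (1 + inverse (Y i (j - 1) k)))"
    and init_m1: "\<And>i j. odd (i + j) \<Longrightarrow>
       Y i j (-1) = inverse (q (((\<kappa> - 2) * i + \<kappa> * j + rfl \<kappa> - rcl \<kappa>) div 2))"
    and init_0: "\<And>i j. even (i + j) \<Longrightarrow>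
       Y i j 0 = p (((\<kappa> - 2) * i + \<kappa> * j) div 2)"
  shows "\<forall>i j k \<alpha> \<beta>. even (i + j + k) \<longrightarrow>
     Y i j k = Y (i + \<alpha> * \<kappa> + \<beta> * n) (j + \<alpha> * (2 - \<kappa>) - \<beta> * n) k"
proof (intro allI impI)
  fix i j k \<alpha> \<beta> :: int
  assume even: "even (i + j + k)"
  define a where "a = \<alpha> * \<kappa> + \<beta> * n"
  define b where "b = \<alpha> * (2 - \<kappa>) - \<beta> * n"
  have Y: "ysystem Y" "nonvanishing Y"
    using Ysys Y_range unfolding ysystem_def yrhs_def nonvanishing_def by blast+
  have shifted: "ysystem (\<lambda>i j k. Y (i + a) (j + b) k)" "nonvanishing (\<lambda>i j k. Y (i + a) (j + b) k)"
    using ysystem_shift[OF Y, of a b] unfolding a_def b_def by (simp_all add: algebra_simps)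
  have same_init: "Y i j k = Y (i + a) (j + b) k" if "k \<in> {-1, 0}" "even (i + j + k)" for i j k
    unfolding a_def b_def
    using initial_data_translation_invariant[OF p_per q_per init_m1 init_0 that] .
  have "Y i j k = Y (i + a) (j + b) k"
    using ysystem_unique[OF Y shifted same_init even] .
  moreover have "i + a = i + \<alpha> * \<kappa> + \<beta> * n" "j + b = j + \<alpha> * (2 - \<kappa>) - \<beta> * n"
    unfolding a_def b_def by simp_all
  ultimately show "Y i j k = Y (i + \<alpha> * \<kappa> + \<beta> * n) (j + \<alpha> * (2 - \<kappa>) - \<beta> * n) k"
    by simp
qed

end
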